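(* The Heisenberg group $\mathrm{UT}_3(\mathbb{Z})$ of upper unitriangular $3\times 3$ integer matrices is not strongly verbally closed.
   Context: A subgroup $H$ of a group $G$ is verbally closed in $G$ if every equation $w(x_1,\dots,x_n)=h$, where $w$ is an element of the free group $F(x_1,\dots,x_n)$ and $h\in H$, that has a solution in $G$ has a solution in $H$. $H$ is algebraically closed in $G$ if every finite system of equations $\{w_1=1,\dots,w_m=1\}$ with $w_i\in H*F(x_1,\dots,x_n)$ that has a solution in $G$ has a solution in $H$. A group $H$ is strongly verbally closed if it is algebraically closed in every group containing $H$ as a verbally closed subgroup. *)

theory Defs
  imports "HOL-Analysis.Finite_Cartesian_Product" "HOL-Algebra.Group"
begin

definition UT3Z :: "(int^3^3) monoid" where
  "UT3Z = \<lparr> carrier = {A :: int^3^3.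
              A$1$1 = 1 \<and> A$2$2 = 1 \<and> A$3$3 = 1 \<and>
              A$2$1 = 0 \<and> A$3$1 = 0 \<and> A$3$2 = 0},
            mult = (\<lambda>A B. A ** B),
            one = mat 1 \<rparr>"

text \<open>Letters of words in G * F(x_0, x_1, ...): a variable x_i or its inverse
  (Var i True = x_i, Var i False = x_i^{-1}), or a constant from the group.
  A word in the free group is a list of letters without constants.\<close>

datatype 'c letter = Var nat bool | Cst 'c

fun evalw :: "('a, 'b) monoid_scheme \<Rightarrow> (nat \<Rightarrow> 'a) \<Rightarrow> 'a letter list \<Rightarrow> 'a" where
  "evalw G f [] = \<one>\<^bsub>G\<^esub>"
| "evalw G f (Var i True # w) = f i \<otimes>\<^bsub>G\<^esub> evalw G f w"
| "evalw G f (Var i False # w) = inv\<^bsub>G\<^esub> (f i) \<otimes>\<^bsub>G\<^esub> evalw G f w"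
| "evalw G f (Cst c # w) = c \<otimes>\<^bsub>G\<^esub> evalw G f w"

definition coeff_free :: "'a letter list \<Rightarrow> bool" where
  "coeff_free w \<longleftrightarrow> (\<forall>c. Cst c \<notin> set w)"

definition coeffs_in :: "'a set \<Rightarrow> 'a letter list \<Rightarrow> bool" where
  "coeffs_in S w \<longleftrightarrow> (\<forall>c. Cst c \<in> set w \<longrightarrow> c \<in> S)"

definition verbally_closed :: "'a set \<Rightarrow> ('a, 'b) monoid_scheme \<Rightarrow> bool" where
  "verbally_closed H G \<longleftrightarrow>
     (\<forall>w h. coeff_free w \<longrightarrow> h \<in> H \<longrightarrow>
        (\<exists>f. (\<forall>i. f i \<in> carrier G) \<and> evalw G f w = h) \<longrightarrow>
        (\<exists>f. (\<forall>i. f i \<in> H) \<and> evalw G f w = h))"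

definition algebraically_closed :: "'a set \<Rightarrow> ('a, 'b) monoid_scheme \<Rightarrow> bool" where
  "algebraically_closed H G \<longleftrightarrow>
     (\<forall>ws. (\<forall>w\<in>set ws. coeffs_in H w) \<longrightarrow>
        (\<exists>f. (\<forall>i. f i \<in> carrier G) \<and> (\<forall>w\<in>set ws. evalw G f w = \<one>\<^bsub>G\<^esub>)) \<longrightarrow>
        (\<exists>f. (\<forall>i. f i \<in> H) \<and> (\<forall>w\<in>set ws. evalw G f w = \<one>\<^bsub>G\<^esub>)))"

end

theory Submission
  imports Defs "HOL-Number_Theory.Cong" "HOL-Library.Countable" "HOL-Analysis.Cartesian_Space"
begin

text \<open>
  Let G be the central product of two copies of UT3(Z) along their centres: its elements are
  tuples (a, b, c, d, z), multiplied by adding entries and putting z + z' + a b' + c d' in the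
  corner. UT3(Z) is the first factor, (a, b, 0, 0, z).

  UT3(Z) is not algebraically closed in G: the equations [x0, x1] = (0,0,0,0,1) and
  [xi, (1,0,0,0,0)] = [xi, (0,1,0,0,0)] = 1 are solved in G by the generators of the second
  factor, while in UT3(Z) they force x0 and x1 into the centre, so that they commute.

  It is verbally closed: a coefficient-free word w takes at xi = (ai, bi, ci, di, zi) the value
  (E a, E b, E c, E d, E z + Q(a, b) + Q(c, d)), where E is the exponent-sum form of w and Q is
  bilinear. If this value lies in UT3(Z), i.e. E c = E d = 0, we need a', b', z' with E a' = E a,
  E b' = E b and E z' + Q(a', b') = E z + Q(a, b) + Q(c, d). If E = 0 this holds because the
  values of a bilinear form over Z are the multiples of its least positive value. Otherwise E
  takes exactly the multiples of some n > 0, and a' = a + s c, b' = b + k d work as soon as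
  s Q(c, b) + k Q(a, d) + s k Q(c, d) = Q(c, d) mod n. This congruence is solvable modulo a
  prime power by inverting a coefficient prime to p (after cancelling a factor p common to all
  of them), hence modulo n by the Chinese remainder theorem.
\<close>

section \<open>A quadratic congruence\<close>

definition solvable_mod :: "int \<Rightarrow> int \<Rightarrow> int \<Rightarrow> int \<Rightarrow> bool" where
  "solvable_mod n u v w \<longleftrightarrow> (\<exists>s k. [s * u + k * v + s * k * w = w] (mod n))"

lemma solvable_mod_swap: "solvable_mod n u v w \<longleftrightarrow> solvable_mod n v u w"
  unfolding solvable_mod_def by (metis add.commute mult.commute)

lemma solvable_mod_coprime_left:
  assumes "coprime u n"
  shows "solvable_mod n u v w"
proof -
  obtain u' where "[u * u' = 1] (mod n)" using cong_solve_coprime_int[OF assms] by blast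
  then have "[w * u' * u + 0 * v + w * u' * 0 * w = w] (mod n)"
    using cong_scalar_left[of "u * u'" 1 n w] by (simp add: ac_simps)
  then show ?thesis unfolding solvable_mod_def by blast
qed

lemma solvable_mod_coprime_right: "coprime v n \<Longrightarrow> solvable_mod n u v w"
  using solvable_mod_coprime_left solvable_mod_swap by blast

lemma solvable_mod_coprime_mid:
  assumes "coprime w n"
  shows "solvable_mod n u v w"
proof -
  obtain w' where w': "[w * w' = 1] (mod n)" using cong_solve_coprime_int[OF assms] by blast
  define s where "s = (1 - v) * w'"
  define k where "k = (w * w + u * v - u) * w'"
  have "[(1 - v) * (w * w') + v = (1 - v) * 1 + v] (mod n)"
    using w' by (intro cong_add cong_mult cong_refl)
  then have ms: "[w * s + v = 1] (mod n)" by (simp add: s_def ac_simps)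
  have "[(w * w + u * v - u) * (w * w') + u = (w * w + u * v - u) * 1 + u] (mod n)"
    using w' by (intro cong_add cong_mult cong_refl)
  then have mk: "[w * k + u = w * w + u * v] (mod n)" by (simp add: k_def ac_simps)
  have "[(w * s + v) * (w * k + u) - u * v = 1 * (w * w + u * v) - u * v] (mod n)"
    using ms mk by (intro cong_diff cong_mult cong_refl)
  moreover have "(w * s + v) * (w * k + u) - u * v = w * (s * u + k * v + s * k * w)"
    by (simp add: algebra_simps)
  ultimately have "[w * (s * u + k * v + s * k * w) = w * w] (mod n)" by simp
  then have "[s * u + k * v + s * k * w = w] (mod n)"
    using cong_mult_lcancel[OF assms] by blast
  then show ?thesis unfolding solvable_mod_def by blast
qed

lemma solvable_mod_prime_power:
  fixes p :: int
  assumes "prime p" and "\<not> (p dvd u \<and> p dvd v \<and> p dvd w)"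
  shows "solvable_mod (p ^ a) u v w"
proof -
  have "coprime x (p ^ a)" if "\<not> p dvd x" for x
    using that assms(1) by (simp add: prime_imp_coprime coprime_commute)
  then show ?thesis
    using assms(2) solvable_mod_coprime_left solvable_mod_coprime_right solvable_mod_coprime_mid
    by blast
qed

lemma solvable_mod_mult:
  assumes "coprime n1 n2" and "solvable_mod n1 u v w" and "solvable_mod n2 u v w"
  shows "solvable_mod (n1 * n2) u v w"
proof -
  obtain s1 k1 where 1: "[s1 * u + k1 * v + s1 * k1 * w = w] (mod n1)"
    using assms(2) unfolding solvable_mod_def by blast
  obtain s2 k2 where 2: "[s2 * u + k2 * v + s2 * k2 * w = w] (mod n2)"
    using assms(3) unfolding solvable_mod_def by blast
  obtain s where s: "[s = s1] (mod n1)" "[s = s2] (mod n2)"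
    using binary_chinese_remainder_int[OF assms(1)] by blast
  obtain k where k: "[k = k1] (mod n1)" "[k = k2] (mod n2)"
    using binary_chinese_remainder_int[OF assms(1)] by blast
  have "[s * u + k * v + s * k * w = w] (mod n1)"
    using s k 1 by (meson cong_add cong_mult cong_refl cong_trans)
  moreover have "[s * u + k * v + s * k * w = w] (mod n2)"
    using s k 2 by (meson cong_add cong_mult cong_refl cong_trans)
  ultimately show ?thesis
    unfolding solvable_mod_def using coprime_cong_mult[OF _ _ assms(1)] by blast
qed

lemma solvable_mod_scale:
  assumes "solvable_mod n u v w"
  shows "solvable_mod (p * n) (p * u) (p * v) (p * w)"
proof -
  obtain s k where "[s * u + k * v + s * k * w = w] (mod n)"
    using assms unfolding solvable_mod_def by blast
  then have "[p * (s * u + k * v + s * k * w) = p * w] (mod p * n)"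
    by (rule cong_cmult_leftI)
  then have "[s * (p * u) + k * (p * v) + s * k * (p * w) = p * w] (mod p * n)"
    by (simp add: algebra_simps)
  then show ?thesis unfolding solvable_mod_def by blast
qed

lemma solvable_mod_nonzero:
  fixes n :: int
  assumes "n \<noteq> 0"
  shows "solvable_mod n u v w"
  using assms
proof (induction "nat \<bar>n\<bar>" arbitrary: n u v w rule: less_induct)
  case (less n u v w)
  have smaller: "nat \<bar>n'\<bar> < nat \<bar>q * n'\<bar>" if "\<bar>q\<bar> > 1" "n' \<noteq> 0" for q n' :: int
    using mult_strict_right_mono[of 1 "\<bar>q\<bar>" "\<bar>n'\<bar>"] that by (simp add: abs_mult)
  show ?case
  proof (cases "is_unit n")
    case True
    then show ?thesis unfolding solvable_mod_def cong_iff_dvd_diff by (blast intro: unit_imp_dvd)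
  next
    case False
    obtain p where p: "prime p" "p dvd n"
      using prime_divisor_exists[of n] less.prems False by auto
    have "\<bar>p\<bar> > 1" using prime_gt_1_int[OF p(1)] by simp
    show ?thesis
    proof (cases "p dvd u \<and> p dvd v \<and> p dvd w")
      case True
      then obtain u' v' w' where uvm: "u = p * u'" "v = p * v'" "w = p * w'" by (meson dvdE)
      obtain n' where n': "n = p * n'" using p(2) by (meson dvdE)
      have "n' \<noteq> 0" using n' less.prems by simp
      moreover have "nat \<bar>n'\<bar> < nat \<bar>n\<bar>"
        using smaller n' \<open>n' \<noteq> 0\<close> \<open>\<bar>p\<bar> > 1\<close> by blast
      ultimately have "solvable_mod n' u' v' w'" using less.hyps by blast
      then show ?thesis unfolding uvm n' by (rule solvable_mod_scale)
    next
      case False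
      define a where "a = multiplicity p n"
      obtain n' where n': "n = p ^ a * n'" "\<not> p dvd n'"
        using multiplicity_decompose'[OF less.prems] p(1) unfolding a_def
        by (metis not_prime_unit)
      have "a > 0"
        using multiplicity_gt_zero_iff[of n p] p(2) less.prems \<open>\<bar>p\<bar> > 1\<close> unfolding a_def by simp
      then have "\<bar>p ^ a\<bar> > 1" using \<open>\<bar>p\<bar> > 1\<close> by (simp add: power_abs one_less_power)
      moreover have "n' \<noteq> 0" using n' less.prems by auto
      ultimately have "nat \<bar>n'\<bar> < nat \<bar>n\<bar>"
        using smaller n'(1) by blast
      then have "solvable_mod n' u v w" using less.hyps \<open>n' \<noteq> 0\<close> by blast
      moreover have "coprime (p ^ a) n'"
        using n'(2) p(1) by (simp add: prime_imp_coprime)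
      ultimately show ?thesis
        unfolding n'(1) using solvable_mod_prime_power[OF p(1) False] solvable_mod_mult by blast
    qed
  qed
qed

section \<open>Linear and bilinear forms over the integers\<close>

definition int_linear :: "(('i \<Rightarrow> int) \<Rightarrow> int) \<Rightarrow> bool" where
  "int_linear L \<longleftrightarrow> (\<forall>s t x y. L (\<lambda>i. s * x i + t * y i) = s * L x + t * L y)"

definition int_bilinear :: "(('i \<Rightarrow> int) \<Rightarrow> ('j \<Rightarrow> int) \<Rightarrow> int) \<Rightarrow> bool" where
  "int_bilinear B \<longleftrightarrow> (\<forall>a. int_linear (B a)) \<and> (\<forall>b. int_linear (\<lambda>a. B a b))"

lemma int_linearD: "int_linear L \<Longrightarrow> L (\<lambda>i. s * x i + t * y i) = s * L x + t * L y"
  unfolding int_linear_def by blast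

lemma int_linear_scale: "int_linear L \<Longrightarrow> L (\<lambda>i. c * x i) = c * L x"
  using int_linearD[of L c x 0 x] by simp

lemma int_linear_zero: "int_linear L \<Longrightarrow> L (\<lambda>i. 0) = 0"
  using int_linear_scale[of L 0] by simp

lemma int_linear_dvd_least_positive:
  assumes L: "int_linear L" and pos: "L x0 > 0" and least: "\<And>x. L x > 0 \<Longrightarrow> L x0 \<le> L x"
  shows "L x0 dvd L x"
proof -
  define q where "q = L x div L x0"
  have "L (\<lambda>i. 1 * x i + (- q) * x0 i) = L x - L x div L x0 * L x0"
    using int_linearD[OF L, of 1 x "- q" x0] by (simp add: q_def)
  also have "\<dots> = L x mod L x0" by (rule minus_div_mult_eq_mod)
  finally have "L x mod L x0 = 0"
    using least[of "\<lambda>i. 1 * x i + (- q) * x0 i"] pos pos_mod_bound[OF pos, of "L x"]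
    by (metis linorder_not_le order_le_less pos_mod_sign)
  then show ?thesis by (simp add: dvd_eq_mod_eq_0)
qed

lemma ex_least_positive_value:
  fixes f :: "'a \<Rightarrow> int"
  assumes "f x \<noteq> 0" and "f y = - f x"
  obtains x0 where "f x0 > 0" and "\<And>x. f x > 0 \<Longrightarrow> f x0 \<le> f x"
proof -
  have "\<exists>x. f x > 0" using assms by (metis neg_0_less_iff_less linorder_neqE)
  then obtain x0 where "f x0 > 0" and "\<forall>x. f x > 0 \<longrightarrow> nat (f x0) \<le> nat (f x)"
    using ex_has_least_nat[of "\<lambda>x. f x > 0" _ "\<lambda>x. nat (f x)"] by blast
  then show thesis using that by force
qed

lemma int_linear_generator:
  assumes L: "int_linear L"
  obtains x0 where "L x0 \<ge> 0" and "\<And>x. L x0 dvd L x"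
proof (cases "\<forall>x. L x = 0")
  case True
  then show thesis using that by simp
next
  case False
  then obtain x1 where "L x1 \<noteq> 0" by blast
  moreover have "L (\<lambda>i. (- 1) * x1 i) = - L x1" using int_linear_scale[OF L, of "- 1" x1] by simp
  ultimately obtain x0 where "L x0 > 0" and "\<And>x. L x > 0 \<Longrightarrow> L x0 \<le> L x"
    using ex_least_positive_value[of L] by blast
  then show thesis using that int_linear_dvd_least_positive[OF L, of x0] by force
qed

lemma int_bilinear_sum_of_values:
  assumes B: "int_bilinear B"
  shows "\<exists>a'' b''. B a'' b'' = B a b + B a' b'"
proof (cases "\<forall>x y. B x y = 0")
  case True
  then show ?thesis by auto
next
  case False
  have lin1: "int_linear (B x)" and lin2: "int_linear (\<lambda>x. B x y)" for x y
    using B unfolding int_bilinear_def by blast+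
  obtain x1 y1 where "B x1 y1 \<noteq> 0" using False by blast
  moreover have "B (\<lambda>i. (- 1) * x1 i) y1 = - B x1 y1"
    using int_linear_scale[OF lin2, of "- 1" x1] by simp
  ultimately obtain p where "case_prod B p > 0"
    and "\<And>p'. case_prod B p' > 0 \<Longrightarrow> case_prod B p \<le> case_prod B p'"
    using ex_least_positive_value[of "case_prod B" "(x1, y1)" "((\<lambda>i. (- 1) * x1 i), y1)"]
    by auto
  then obtain a0 b0 where pos: "B a0 b0 > 0"
    and least: "\<And>x y. B x y > 0 \<Longrightarrow> B a0 b0 \<le> B x y"
    by (cases p) fastforce
  define m where "m = B a0 b0"
  have row: "m dvd B x y" if "B x b0 = m" for x y
    using int_linear_dvd_least_positive[OF lin1, of x b0] that pos least unfolding m_def by simp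
  have all: "m dvd B x y" for x y
  proof -
    obtain t where t: "B x b0 = m * t"
      using int_linear_dvd_least_positive[OF lin2, of a0 b0] pos least unfolding m_def by blast
    define x' where "x' = (\<lambda>i. 1 * x i + (1 - t) * a0 i)"
    have "B x' b0 = 1 * B x b0 + (1 - t) * B a0 b0"
      unfolding x'_def by (rule int_linearD[OF lin2])
    then have "B x' b0 = m" using t by (simp add: m_def algebra_simps)
    then have "m dvd B x' y" by (rule row)
    moreover have "m dvd (1 - t) * B a0 y" using row m_def by simp
    ultimately have "m dvd B x' y - (1 - t) * B a0 y" by (rule dvd_diff)
    moreover have "B x' y = 1 * B x y + (1 - t) * B a0 y"
      unfolding x'_def by (rule int_linearD[OF lin2])
    ultimately show ?thesis by simp
  qed
  obtain u where "B a b + B a' b' = m * u" using all by (meson dvd_add dvdE)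
  then have "B (\<lambda>i. u * a0 i) b0 = B a b + B a' b'"
    using int_linear_scale[OF lin2] by (simp add: m_def)
  then show ?thesis by blast
qed

lemma int_bilinear_shift:
  assumes L: "int_linear L" and B: "int_bilinear B" and a': "L a' = 0" and b': "L b' = 0"
  shows "\<exists>a'' b'' z''. L a'' = L a \<and> L b'' = L b \<and>
           L z'' + B a'' b'' = L z + B a b + B a' b'"
proof -
  have lin1: "int_linear (B x)" and lin2: "int_linear (\<lambda>x. B x y)" for x y
    using B unfolding int_bilinear_def by blast+
  obtain g where "L g \<ge> 0" and gen: "\<And>x. L g dvd L x"
    using int_linear_generator[OF L] by blast
  show ?thesis
  proof (cases "L g = 0")
    case True
    then have zero: "L x = 0" for x using gen[of x] by simp
    obtain a'' b'' where "B a'' b'' = B a b + B a' b'"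
      using int_bilinear_sum_of_values[OF B] by blast
    then have "L a'' = L a \<and> L b'' = L b \<and> L z + B a'' b'' = L z + B a b + B a' b'"
      using zero by simp
    then show ?thesis by blast
  next
    case False
    let ?u = "B a' b" and ?v = "B a b'" and ?w = "B a' b'"
    obtain s k where sk: "[s * ?u + k * ?v + s * k * ?w = ?w] (mod L g)"
      using solvable_mod_nonzero[OF False] unfolding solvable_mod_def by blast
    define a'' where "a'' = (\<lambda>i. 1 * a i + s * a' i)"
    define b'' where "b'' = (\<lambda>i. 1 * b i + k * b' i)"
    have "L a'' = 1 * L a + s * L a'" and "L b'' = 1 * L b + k * L b'"
      unfolding a''_def b''_def by (rule int_linearD[OF L])+
    then have "L a'' = L a" and "L b'' = L b" using a' b' by simp_all
    have "B a'' b'' = 1 * B a b'' + s * B a' b''"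
      unfolding a''_def by (rule int_linearD[OF lin2])
    also have "\<dots> = 1 * (1 * B a b + k * ?v) + s * (1 * ?u + k * ?w)"
      unfolding b''_def by (simp only: int_linearD[OF lin1])
    finally have "L z + B a b + ?w - B a'' b'' = L z + (?w - (s * ?u + k * ?v + s * k * ?w))"
      by (simp add: algebra_simps)
    moreover have "L g dvd ?w - (s * ?u + k * ?v + s * k * ?w)"
      using sk by (simp add: cong_iff_dvd_diff dvd_diff_commute)
    ultimately have "L g dvd L z + B a b + ?w - B a'' b''"
      using dvd_add[OF gen[of z]] by (simp only:)
    then obtain q where "L z + B a b + ?w - B a'' b'' = L g * q" by (rule dvdE)
    then have "L (\<lambda>i. q * g i) + B a'' b'' = L z + B a b + ?w"
      using int_linear_scale[OF L] by (simp add: algebra_simps)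
    then show ?thesis using \<open>L a'' = L a\<close> \<open>L b'' = L b\<close> by blast
  qed
qed

section \<open>Words evaluated in the central product\<close>

fun exp_sum :: "'c letter list \<Rightarrow> (nat \<Rightarrow> int) \<Rightarrow> int" where
  "exp_sum [] x = 0"
| "exp_sum (Var i True # w) x = x i + exp_sum w x"
| "exp_sum (Var i False # w) x = exp_sum w x - x i"
| "exp_sum (Cst c # w) x = exp_sum w x"

fun corner_form :: "'c letter list \<Rightarrow> (nat \<Rightarrow> int) \<Rightarrow> (nat \<Rightarrow> int) \<Rightarrow> int" where
  "corner_form [] a b = 0"
| "corner_form (Var i True # w) a b = a i * exp_sum w b + corner_form w a b"
| "corner_form (Var i False # w) a b = a i * b i - a i * exp_sum w b + corner_form w a b"
| "corner_form (Cst c # w) a b = corner_form w a b"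

lemma int_linear_exp_sum: "int_linear (exp_sum w)"
  unfolding int_linear_def
proof (intro allI)
  show "exp_sum w (\<lambda>i. s * x i + t * y i) = s * exp_sum w x + t * exp_sum w y" for s t x y
    by (induction w x rule: exp_sum.induct) (auto simp: algebra_simps)
qed

lemma int_bilinear_corner_form: "int_bilinear (corner_form w)"
  unfolding int_bilinear_def int_linear_def
proof (intro conjI allI)
  show "corner_form w a (\<lambda>i. s * x i + t * y i) = s * corner_form w a x + t * corner_form w a y"
    for a s t x y
    by (induction w a x rule: corner_form.induct)
      (auto simp: algebra_simps int_linearD[OF int_linear_exp_sum])
  show "corner_form w (\<lambda>i. s * x i + t * y i) b = s * corner_form w x b + t * corner_form w y b"
    for b s t x y
    by (induction w x b rule: corner_form.induct) (auto simp: algebra_simps)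
qed

text \<open>CP a b c d z stands for the pair of matrices [[1,a,z],[0,1,b],[0,0,1]] and
  [[1,c,z],[0,1,d],[0,0,1]] with a common corner.\<close>

datatype cprod = CP (cp_a: int) (cp_b: int) (cp_c: int) (cp_d: int) (cp_z: int)

instance cprod :: countable by countable_datatype

definition cp_mult :: "cprod \<Rightarrow> cprod \<Rightarrow> cprod" where
  "cp_mult x y = CP (cp_a x + cp_a y) (cp_b x + cp_b y) (cp_c x + cp_c y) (cp_d x + cp_d y)
     (cp_z x + cp_z y + cp_a x * cp_b y + cp_c x * cp_d y)"

definition cp_inv :: "cprod \<Rightarrow> cprod" where
  "cp_inv x = CP (- cp_a x) (- cp_b x) (- cp_c x) (- cp_d x)
     (cp_a x * cp_b x + cp_c x * cp_d x - cp_z x)"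

text \<open>The theorem asks for a group on nat, so cprod is coded into nat by to_nat.\<close>

definition CP_group :: "nat monoid" where
  "CP_group = \<lparr>carrier = range (to_nat :: cprod \<Rightarrow> nat),
     monoid.mult = \<lambda>x y. to_nat (cp_mult (from_nat x) (from_nat y)),
     monoid.one = to_nat (CP 0 0 0 0 0)\<rparr>"

lemma CP_group_carrier [simp]: "carrier CP_group = range (to_nat :: cprod \<Rightarrow> nat)"
  and CP_group_mult [simp]: "to_nat x \<otimes>\<^bsub>CP_group\<^esub> to_nat y = to_nat (cp_mult x y)"
  and CP_group_one [simp]: "\<one>\<^bsub>CP_group\<^esub> = to_nat (CP 0 0 0 0 0)"
  by (simp_all add: CP_group_def)

lemma group_CP_group: "group CP_group"
proof (rule groupI)
  show "x \<otimes>\<^bsub>CP_group\<^esub> y \<otimes>\<^bsub>CP_group\<^esub> z = x \<otimes>\<^bsub>CP_group\<^esub> (y \<otimes>\<^bsub>CP_group\<^esub> z)"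
    if "x \<in> carrier CP_group" "y \<in> carrier CP_group" "z \<in> carrier CP_group" for x y z
    using that by (auto simp: cp_mult_def algebra_simps)
  show "\<exists>y\<in>carrier CP_group. y \<otimes>\<^bsub>CP_group\<^esub> x = \<one>\<^bsub>CP_group\<^esub>"
    if x: "x \<in> carrier CP_group" for x
  proof -
    obtain c :: cprod where "x = to_nat c" using x by auto
    then have "to_nat (cp_inv c) \<otimes>\<^bsub>CP_group\<^esub> x = \<one>\<^bsub>CP_group\<^esub>"
      by (simp add: cp_mult_def cp_inv_def)
    then show ?thesis by auto
  qed
qed (auto simp: cp_mult_def)

lemma CP_group_inv [simp]: "inv\<^bsub>CP_group\<^esub> (to_nat x) = to_nat (cp_inv x)"
  by (rule group.inv_equality[OF group_CP_group]) (auto simp: cp_mult_def cp_inv_def)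

lemma evalw_CP_group:
  assumes "coeff_free w"
  shows "evalw CP_group (\<lambda>i. to_nat (x i)) w =
    to_nat (CP (exp_sum w (\<lambda>i. cp_a (x i))) (exp_sum w (\<lambda>i. cp_b (x i)))
               (exp_sum w (\<lambda>i. cp_c (x i))) (exp_sum w (\<lambda>i. cp_d (x i)))
               (exp_sum w (\<lambda>i. cp_z (x i)) + corner_form w (\<lambda>i. cp_a (x i)) (\<lambda>i. cp_b (x i))
                  + corner_form w (\<lambda>i. cp_c (x i)) (\<lambda>i. cp_d (x i))))"
  using assms
proof (induction w)
  case (Cons l w)
  have "coeff_free w" using Cons.prems by (simp add: coeff_free_def)
  note IH = Cons.IH[OF this]
  show ?case
  proof (cases l)
    case (Var i e)
    then show ?thesis using IH by (cases e) (simp_all add: cp_mult_def cp_inv_def algebra_simps)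
  next
    case (Cst c)
    then show ?thesis using Cons.prems by (auto simp: coeff_free_def)
  qed
qed (simp)

section \<open>UT3(Z) is verbally but not algebraically closed\<close>

definition ut3_embed :: "int^3^3 \<Rightarrow> nat" where
  "ut3_embed A = to_nat (CP (A$1$2) (A$2$3) 0 0 (A$1$3))"

lemma UT3Z_carrier_iff:
  "A \<in> carrier UT3Z \<longleftrightarrow>
     A$1$1 = 1 \<and> A$2$2 = 1 \<and> A$3$3 = 1 \<and> A$2$1 = 0 \<and> A$3$1 = 0 \<and> A$3$2 = 0"
  by (simp add: UT3Z_def)

lemma matrix_mult_3_entry:
  "(A ** B) $ i $ j = A$i$1 * B$1$j + A$i$2 * B$2$j + A$i$3 * B$3$j" for A B :: "int^3^3"
  by (simp add: matrix_matrix_mult_def sum_3)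

lemma UT3Z_mult: "A \<otimes>\<^bsub>UT3Z\<^esub> B = A ** B"
  by (simp add: UT3Z_def)

lemma ut3_embed_hom: "ut3_embed \<in> hom UT3Z CP_group"
proof (rule homI)
  show "ut3_embed (A \<otimes>\<^bsub>UT3Z\<^esub> B) = ut3_embed A \<otimes>\<^bsub>CP_group\<^esub> ut3_embed B"
    if "A \<in> carrier UT3Z" "B \<in> carrier UT3Z" for A B
    using that unfolding UT3Z_carrier_iff UT3Z_mult
    by (simp add: ut3_embed_def matrix_mult_3_entry cp_mult_def algebra_simps)
qed (simp add: ut3_embed_def)

lemma ut3_embed_inj: "inj_on ut3_embed (carrier UT3Z)"
proof (rule inj_onI)
  fix A B assume A: "A \<in> carrier UT3Z" and B: "B \<in> carrier UT3Z"
    and "ut3_embed A = ut3_embed B"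
  then have "A$1$2 = B$1$2" "A$2$3 = B$2$3" "A$1$3 = B$1$3" by (simp_all add: ut3_embed_def)
  then have "A $ i $ j = B $ i $ j" for i j
    using A B exhaust_3[of i] exhaust_3[of j] unfolding UT3Z_carrier_iff by auto
  then show "A = B" by (simp add: vec_eq_iff)
qed

lemma ut3_embed_image:
  "y \<in> ut3_embed ` carrier UT3Z \<longleftrightarrow> (\<exists>a b z. y = to_nat (CP a b 0 0 z))"
proof
  assume "\<exists>a b z. y = to_nat (CP a b 0 0 z)"
  then obtain a b z where "y = to_nat (CP a b 0 0 z)" by blast
  moreover define A :: "int^3^3" where "A = vector [vector [1, a, z], vector [0, 1, b], vector [0, 0, 1]]"
  ultimately have "y = ut3_embed A" and "A \<in> carrier UT3Z"
    unfolding ut3_embed_def UT3Z_carrier_iff by simp_all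
  then show "y \<in> ut3_embed ` carrier UT3Z" by blast
qed (auto simp: ut3_embed_def)

lemma verbally_closed_ut3: "verbally_closed (ut3_embed ` carrier UT3Z) CP_group"
  unfolding verbally_closed_def
proof (intro allI impI)
  fix w :: "nat letter list" and h
  assume w: "coeff_free w" and "h \<in> ut3_embed ` carrier UT3Z"
    and "\<exists>f. (\<forall>i. f i \<in> carrier CP_group) \<and> evalw CP_group f w = h"
  then obtain p q r f where h: "h = to_nat (CP p q 0 0 r)"
    and f: "\<forall>i. f i \<in> carrier CP_group" "evalw CP_group f w = h"
    using ut3_embed_image by blast
  define x :: "nat \<Rightarrow> cprod" where "x i = from_nat (f i)" for i
  have "f = (\<lambda>i. to_nat (x i))"
  proof
    fix i
    obtain c :: cprod where "f i = to_nat c" using f(1) by auto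
    then show "f i = to_nat (x i)" by (simp add: x_def)
  qed
  then have "exp_sum w (\<lambda>i. cp_a (x i)) = p" "exp_sum w (\<lambda>i. cp_b (x i)) = q"
    "exp_sum w (\<lambda>i. cp_c (x i)) = 0" "exp_sum w (\<lambda>i. cp_d (x i)) = 0"
    "exp_sum w (\<lambda>i. cp_z (x i)) + corner_form w (\<lambda>i. cp_a (x i)) (\<lambda>i. cp_b (x i))
       + corner_form w (\<lambda>i. cp_c (x i)) (\<lambda>i. cp_d (x i)) = r"
    using evalw_CP_group[OF w, of x] f(2) h by simp_all
  then obtain a b z where sol: "exp_sum w a = p" "exp_sum w b = q"
    "exp_sum w z + corner_form w a b = r"
    using int_bilinear_shift[OF int_linear_exp_sum[of w] int_bilinear_corner_form[of w],
        where a = "\<lambda>i. cp_a (x i)" and b = "\<lambda>i. cp_b (x i)" and z = "\<lambda>i. cp_z (x i)"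
          and a' = "\<lambda>i. cp_c (x i)" and b' = "\<lambda>i. cp_d (x i)"]
    by auto
  have zero: "exp_sum w (\<lambda>i. 0) = 0" "corner_form w (\<lambda>i. 0) (\<lambda>i. 0) = 0"
    using int_linear_zero int_linear_exp_sum int_bilinear_corner_form
    unfolding int_bilinear_def by blast+
  define y where "y i = to_nat (CP (a i) (b i) 0 0 (z i))" for i
  have "evalw CP_group y w = h"
    unfolding y_def using evalw_CP_group[OF w] h sol zero by simp
  moreover have "\<forall>i. y i \<in> ut3_embed ` carrier UT3Z"
    unfolding y_def ut3_embed_image by blast
  ultimately show "\<exists>f. (\<forall>i. f i \<in> ut3_embed ` carrier UT3Z) \<and> evalw CP_group f w = h"
    by blast
qed

definition commutator_word :: "nat \<Rightarrow> cprod \<Rightarrow> nat letter list" where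
  "commutator_word i g = [Var i True, Cst (to_nat g), Var i False, Cst (to_nat (cp_inv g))]"

definition centralizer_system :: "nat letter list list" where
  "centralizer_system =
     [[Var 0 True, Var 1 True, Var 0 False, Var 1 False, Cst (to_nat (CP 0 0 0 0 (- 1)))],
      commutator_word 0 (CP 1 0 0 0 0), commutator_word 0 (CP 0 1 0 0 0),
      commutator_word 1 (CP 1 0 0 0 0), commutator_word 1 (CP 0 1 0 0 0)]"

lemma centralizer_system_coeffs:
  "\<forall>w\<in>set centralizer_system. coeffs_in (ut3_embed ` carrier UT3Z) w"
  unfolding centralizer_system_def commutator_word_def coeffs_in_def ut3_embed_image
  by (auto simp: cp_inv_def)

lemma centralizer_system_solution:
  "\<forall>w\<in>set centralizer_system.
     evalw CP_group (\<lambda>i. to_nat (CP 0 0 (if i = 0 then 1 else 0) (if i = 1 then 1 else 0) 0)) w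
       = \<one>\<^bsub>CP_group\<^esub>"
  by (simp add: centralizer_system_def commutator_word_def cp_mult_def cp_inv_def)

lemma centralizer_system_no_ut3_solution:
  assumes "\<forall>i. f i \<in> ut3_embed ` carrier UT3Z"
  shows "\<not> (\<forall>w\<in>set centralizer_system. evalw CP_group f w = \<one>\<^bsub>CP_group\<^esub>)"
proof
  define y :: "nat \<Rightarrow> cprod" where "y i = from_nat (f i)" for i
  have f: "f i = to_nat (CP (cp_a (y i)) (cp_b (y i)) 0 0 (cp_z (y i)))" for i
  proof -
    obtain a b z where "f i = to_nat (CP a b 0 0 z)" using assms unfolding ut3_embed_image by blast
    then show ?thesis by (simp add: y_def)
  qed
  assume solved: "\<forall>w\<in>set centralizer_system. evalw CP_group f w = \<one>\<^bsub>CP_group\<^esub>"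
  then have "cp_a (y 0) = 0" "cp_b (y 0) = 0" "cp_a (y 1) = 0" "cp_b (y 1) = 0"
    by (simp_all add: f centralizer_system_def commutator_word_def cp_mult_def cp_inv_def)
  with solved show False
    by (simp add: f centralizer_system_def cp_mult_def cp_inv_def)
qed

lemma not_algebraically_closed_ut3: "\<not> algebraically_closed (ut3_embed ` carrier UT3Z) CP_group"
proof
  assume "algebraically_closed (ut3_embed ` carrier UT3Z) CP_group"
  moreover have "\<exists>f. (\<forall>i. f i \<in> carrier CP_group) \<and>
      (\<forall>w\<in>set centralizer_system. evalw CP_group f w = \<one>\<^bsub>CP_group\<^esub>)"
    using centralizer_system_solution by (intro exI conjI) simp_all
  ultimately obtain f where "\<forall>i. f i \<in> ut3_embed ` carrier UT3Z"
    and "\<forall>w\<in>set centralizer_system. evalw CP_group f w = \<one>\<^bsub>CP_group\<^esub>"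
    using centralizer_system_coeffs unfolding algebraically_closed_def by blast
  then show False using centralizer_system_no_ut3_solution by blast
qed

theorem mainTheorem2:
  shows "\<exists>(G :: nat monoid) \<phi>. group G \<and> \<phi> \<in> hom UT3Z G \<and> inj_on \<phi> (carrier UT3Z) \<and>
           verbally_closed (\<phi> ` carrier UT3Z) G \<and>
           \<not> algebraically_closed (\<phi> ` carrier UT3Z) G"
  using group_CP_group ut3_embed_hom ut3_embed_inj verbally_closed_ut3 not_algebraically_closed_ut3
  by blast

end
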